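(* Let $M>5$. The ideology $\mu_{fr}(q,M)$ of the fringe media organization becomes weakly more extreme (i.e. is weakly decreasing) as the strength of confirmation bias $q\in[0,1]$ increases.
   Context: There are $M$ media organizations; each chooses an ideology $\mu_m\in[0,1]$ (fixed thereafter) to maximize its audience, the mass of agents who listen to it. Agents' initial beliefs $x_{i0}$ are i.i.d. draws from $U[0,1]$. Each agent listens to (forms a costless link of small weight with) exactly one media organization, namely the one whose ideology is closest to her belief, except that under confirmation bias of strength $q$ agent $i$ listens to organization $m$ only if $|x_{i0}-\mu_m|\le 1-q$. An equilibrium is a profile of ideologies $(\mu_1,\dots,\mu_M)$ from which no organization can profitably deviate; $\Psi^q_M$ is the set of equilibria. The fringe media organization's ideology is $\mu_{fr}(q,M)=\min\{\mu_m:\mu_m\text{ an ideology in some equilibrium in }\Psi^q_M\}$, the most extreme (left) equilibrium ideology. *)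

theory Defs
  imports "HOL-Analysis.Analysis"
begin

text \<open>Agents' beliefs are uniform on [0,1] (Lebesgue measure).
  An agent at x listens to m if m is (weakly) closest and within distance 1-q;
  organizations located at the same ideology share their common audience equally
  (ties between distinct locations occur on a null set).\<close>

definition valid_profile :: "nat \<Rightarrow> (nat \<Rightarrow> real) \<Rightarrow> bool" where
  "valid_profile M \<mu> \<longleftrightarrow> (\<forall>m<M. 0 \<le> \<mu> m \<and> \<mu> m \<le> 1)"

definition audience :: "real \<Rightarrow> nat \<Rightarrow> (nat \<Rightarrow> real) \<Rightarrow> nat \<Rightarrow> real" where
  "audience q M \<mu> m =
     measure lborel {x \<in> {0..1}. \<bar>x - \<mu> m\<bar> \<le> 1 - q \<and> (\<forall>j<M. \<bar>x - \<mu> m\<bar> \<le> \<bar>x - \<mu> j\<bar>)}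
     / real (card {j. j < M \<and> \<mu> j = \<mu> m})"

definition equilibrium :: "real \<Rightarrow> nat \<Rightarrow> (nat \<Rightarrow> real) \<Rightarrow> bool" where
  "equilibrium q M \<mu> \<longleftrightarrow> valid_profile M \<mu> \<and>
     (\<forall>m<M. \<forall>y\<in>{0..1}. audience q M (\<mu>(m := y)) m \<le> audience q M \<mu> m)"

definition Psi :: "real \<Rightarrow> nat \<Rightarrow> (nat \<Rightarrow> real) set" where
  "Psi q M = {\<mu>. equilibrium q M \<mu>}"

definition mu_fr :: "real \<Rightarrow> nat \<Rightarrow> real" where
  "mu_fr q M = Inf {\<mu> m | \<mu> m. \<mu> \<in> Psi q M \<and> m < M}"

end

(*
  Write r = 1 - q for the listening radius and a = 1 / (2 (M - 2)). We show that
  mu_fr q M = min r a, which is nonincreasing in q.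

  Lower bound: let c be the leftmost location of an equilibrium and suppose c < min r a. A firm
  alone at c would gain by moving slightly to the right, so c is shared, and moving right also
  shows that a firm at c has audience at most c. Such a firm would profit from jumping to 1 - c
  unless the rightmost location b satisfies 1 - b <= c, and from jumping into the middle of any
  gap longer than 2 c between adjacent locations. By the mirror image of the first argument b is
  shared too, so there are at most M - 2 distinct locations, and the intervals of radius c
  around them cover [0, 1]. Hence 1 <= 2 c (M - 2) < 1.

  Upper bound: if r < a, firms spread evenly from r to 1 - r form an equilibrium; otherwise so
  do firms at a, 3 a, ..., 1 - a with two firms at each end. In both cases a deviating firm
  gains at most half the gap between the rivals around its new location, or what lies beyond the
  outermost rival, and this is no more than what it already has.
*)

theory Submission
  imports Defs
begin

section \<open>Listener sets\<close>

definition listeners :: "real \<Rightarrow> nat \<Rightarrow> (nat \<Rightarrow> real) \<Rightarrow> nat \<Rightarrow> real set" where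
  "listeners q M \<mu> m =
     {x \<in> {0..1}. \<bar>x - \<mu> m\<bar> \<le> 1 - q \<and> (\<forall>j<M. \<bar>x - \<mu> m\<bar> \<le> \<bar>x - \<mu> j\<bar>)}"

abbreviation colocated :: "nat \<Rightarrow> (nat \<Rightarrow> real) \<Rightarrow> nat \<Rightarrow> nat set" where
  "colocated M \<mu> m \<equiv> {j. j < M \<and> \<mu> j = \<mu> m}"

lemma audience_eq: "audience q M \<mu> m = measure lborel (listeners q M \<mu> m) / card (colocated M \<mu> m)"
  unfolding audience_def listeners_def ..

lemma listenersD:
  assumes "x \<in> listeners q M \<mu> m"
  shows "0 \<le> x" "x \<le> 1" "\<bar>x - \<mu> m\<bar> \<le> 1 - q" "\<And>j. j < M \<Longrightarrow> \<bar>x - \<mu> m\<bar> \<le> \<bar>x - \<mu> j\<bar>"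
  using assms unfolding listeners_def by auto

lemma compact_listeners: "compact (listeners q M \<mu> m)"
proof -
  have "listeners q M \<mu> m = {0..1} \<inter> {x. \<bar>x - \<mu> m\<bar> \<le> 1 - q} \<inter>
      (\<Inter>j<M. {x. \<bar>x - \<mu> m\<bar> \<le> \<bar>x - \<mu> j\<bar>})"
    unfolding listeners_def by auto
  also have "compact \<dots>"
    by (intro compact_Int_closed closed_Int closed_INT ballI closed_Collect_le)
       (auto intro!: continuous_intros)
  finally show ?thesis .
qed

lemma sets_listeners: "listeners q M \<mu> m \<in> sets lborel"
  using compact_listeners by (simp add: borel_compact)

lemma measure_listeners_le:
  assumes "listeners q M \<mu> m \<subseteq> {lo..hi}" "lo \<le> hi"
  shows "measure lborel (listeners q M \<mu> m) \<le> hi - lo"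
proof -
  have "measure lborel (listeners q M \<mu> m) \<le> measure lborel {lo..hi}"
    using assms(1) compact_listeners
    by (intro measure_mono_fmeasurable) (auto intro: fmeasurable_compact borel_compact)
  then show ?thesis using assms(2) by simp
qed

lemma measure_listeners_ge:
  assumes "{lo..hi} \<subseteq> listeners q M \<mu> m"
  shows "hi - lo \<le> measure lborel (listeners q M \<mu> m)"
proof (cases "lo \<le> hi")
  case True
  have "measure lborel {lo..hi} \<le> measure lborel (listeners q M \<mu> m)"
    using assms compact_listeners
    by (intro measure_mono_fmeasurable) (auto intro: fmeasurable_compact borel_compact)
  then show ?thesis using True by simp
qed (use measure_nonneg[of lborel "listeners q M \<mu> m"] in linarith)

lemma measure_listeners_le_radius:
  assumes "q \<le> 1"
  shows "measure lborel (listeners q M \<mu> m) \<le> 2 * (1 - q)"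
proof -
  have "listeners q M \<mu> m \<subseteq> {\<mu> m - (1 - q) .. \<mu> m + (1 - q)}"
    using listenersD(3) by (fastforce simp: abs_le_iff)
  from measure_listeners_le[OF this] show ?thesis using assms by simp
qed

lemma listener_ge_midpoint:
  assumes "x \<in> listeners q M \<mu> m" "j < M" "\<mu> j < \<mu> m"
  shows "(\<mu> j + \<mu> m) / 2 \<le> x"
  using listenersD(4)[OF assms(1,2)] assms(3) by (auto simp: abs_if split: if_splits)

lemma listener_le_midpoint:
  assumes "x \<in> listeners q M \<mu> m" "j < M" "\<mu> m < \<mu> j"
  shows "x \<le> (\<mu> m + \<mu> j) / 2"
  using listenersD(4)[OF assms(1,2)] assms(3) by (auto simp: abs_if split: if_splits)

text \<open>A rival at or beyond the mirror image of an endpoint through \<open>\<mu> m\<close> is nowhere in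
  \<open>{lo..hi}\<close> strictly closer than \<open>\<mu> m\<close>.\<close>

lemma interval_subset_listeners:
  assumes "0 \<le> lo" "hi \<le> 1" "lo \<le> \<mu> m" "\<mu> m \<le> hi" "\<mu> m - lo \<le> 1 - q" "hi - \<mu> m \<le> 1 - q"
    and "\<And>j. j < M \<Longrightarrow> \<mu> j = \<mu> m \<or> \<mu> j \<le> 2 * lo - \<mu> m \<or> 2 * hi - \<mu> m \<le> \<mu> j"
  shows "{lo..hi} \<subseteq> listeners q M \<mu> m"
proof
  fix x assume x: "x \<in> {lo..hi}"
  have "\<bar>x - \<mu> m\<bar> \<le> \<bar>x - \<mu> j\<bar>" if "j < M" for j
    using assms(3,4) assms(7)[OF that] x by (auto simp: abs_if)
  then show "x \<in> listeners q M \<mu> m"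
    using assms(1-6) x unfolding listeners_def by (auto simp: abs_if)
qed

lemma card_colocated_ge_1: "m < M \<Longrightarrow> 1 \<le> card (colocated M \<mu> m)"
proof -
  assume "m < M"
  then have "colocated M \<mu> m \<noteq> {}" "finite (colocated M \<mu> m)" by auto
  then show ?thesis by (simp add: Suc_le_eq card_gt_0_iff)
qed

lemma audience_le_measure: "m < M \<Longrightarrow> audience q M \<mu> m \<le> measure lborel (listeners q M \<mu> m)"
proof -
  assume "m < M"
  then have "1 \<le> real (card (colocated M \<mu> m))" using card_colocated_ge_1 by simp
  then have "measure lborel (listeners q M \<mu> m) / card (colocated M \<mu> m)
      \<le> measure lborel (listeners q M \<mu> m) / 1"
    by (intro divide_left_mono) auto
  then show ?thesis unfolding audience_eq by simp
qed

lemma audience_eq_measure: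
  assumes "m < M" "\<And>j. j < M \<Longrightarrow> \<mu> j = \<mu> m \<Longrightarrow> j = m"
  shows "audience q M \<mu> m = measure lborel (listeners q M \<mu> m)"
proof -
  have "colocated M \<mu> m = {m}" using assms by auto
  then show ?thesis unfolding audience_eq by simp
qed

lemma audience_update_eq_measure:
  assumes "m < M" "\<And>j. j < M \<Longrightarrow> j \<noteq> m \<Longrightarrow> \<mu> j \<noteq> y"
  shows "audience q M (\<mu>(m := y)) m = measure lborel (listeners q M (\<mu>(m := y)) m)"
  using assms by (intro audience_eq_measure) (auto split: if_splits)

lemma audience_le_half_measure:
  assumes "m < M" "j < M" "j \<noteq> m" "\<mu> j = \<mu> m"
  shows "audience q M \<mu> m \<le> measure lborel (listeners q M \<mu> m) / 2"
proof -
  have "card {m, j} \<le> card (colocated M \<mu> m)"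
    using assms by (intro card_mono) auto
  then have "2 \<le> real (card (colocated M \<mu> m))" using assms(3) by simp
  then have "measure lborel (listeners q M \<mu> m) / card (colocated M \<mu> m)
      \<le> measure lborel (listeners q M \<mu> m) / 2"
    by (intro divide_left_mono) auto
  then show ?thesis unfolding audience_eq .
qed

lemma audience_nonneg: "0 \<le> audience q M \<mu> m"
  unfolding audience_eq by simp

lemma equilibrium_location_range: "equilibrium q M \<mu> \<Longrightarrow> j < M \<Longrightarrow> 0 \<le> \<mu> j \<and> \<mu> j \<le> 1"
  unfolding equilibrium_def valid_profile_def by auto

lemma equilibrium_deviation:
  "equilibrium q M \<mu> \<Longrightarrow> m < M \<Longrightarrow> 0 \<le> y \<Longrightarrow> y \<le> 1 \<Longrightarrow>
    audience q M (\<mu>(m := y)) m \<le> audience q M \<mu> m"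
  unfolding equilibrium_def by auto

lemma listeners_reflect:
  "listeners q M (\<lambda>j. 1 - \<mu> j) m = (\<lambda>x. 1 - x) ` listeners q M \<mu> m"
proof -
  have "listeners q M (\<lambda>j. 1 - \<mu> j) m = (\<lambda>x. 1 - x) -` listeners q M \<mu> m"
    unfolding listeners_def by (auto simp: abs_minus_commute)
  also have "\<dots> = (\<lambda>x. 1 - x) ` listeners q M \<mu> m"
    by (auto intro: rev_image_eqI[of "1 - x" for x])
  finally show ?thesis .
qed

lemma measure_reflect:
  fixes S :: "real set"
  assumes "compact S"
  shows "measure lborel ((\<lambda>x. 1 - x) ` S) = measure lborel S"
proof -
  have "compact ((\<lambda>x. 1 - x) ` S)"
    using assms by (intro compact_continuous_image) (auto intro!: continuous_intros)
  then have "measure lborel ((\<lambda>x. 1 - x) ` S) = measure lebesgue ((\<lambda>x. (-1) *\<^sub>R x + 1) ` S)"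
    by (simp add: borel_compact)
  also have "\<dots> = measure lebesgue S"
    by (subst measure_lebesgue_affine) simp
  also have "\<dots> = measure lborel S"
    using assms by (simp add: borel_compact)
  finally show ?thesis .
qed

lemma audience_reflect: "audience q M (\<lambda>j. 1 - \<mu> j) m = audience q M \<mu> m"
  unfolding audience_eq listeners_reflect measure_reflect[OF compact_listeners] by simp

lemma equilibrium_reflect:
  assumes "equilibrium q M \<mu>"
  shows "equilibrium q M (\<lambda>j. 1 - \<mu> j)"
  unfolding equilibrium_def
proof (intro conjI allI impI ballI)
  show "valid_profile M (\<lambda>j. 1 - \<mu> j)"
    using equilibrium_location_range[OF assms] by (auto simp: valid_profile_def)
  fix m y assume "m < M" "y \<in> {0..1::real}"
  have "(\<lambda>j. 1 - \<mu> j)(m := y) = (\<lambda>j. 1 - (\<mu>(m := 1 - y)) j)" by auto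
  then have "audience q M ((\<lambda>j. 1 - \<mu> j)(m := y)) m = audience q M (\<mu>(m := 1 - y)) m"
    by (simp only: audience_reflect)
  also have "\<dots> \<le> audience q M \<mu> m"
    using equilibrium_deviation[OF assms \<open>m < M\<close>, of "1 - y"] \<open>y \<in> {0..1}\<close> by simp
  finally show "audience q M ((\<lambda>j. 1 - \<mu> j)(m := y)) m \<le> audience q M (\<lambda>j. 1 - \<mu> j) m"
    by (simp only: audience_reflect)
qed

section \<open>Lower bound on equilibrium locations\<close>

definition adjacent_gaps_le :: "real set \<Rightarrow> real \<Rightarrow> bool" where
  "adjacent_gaps_le P D \<longleftrightarrow> (\<forall>p\<in>P. \<forall>p'\<in>P. p < p' \<longrightarrow> (\<forall>z\<in>P. z \<le> p \<or> p' \<le> z) \<longrightarrow> p' - p \<le> D)"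

lemma adjacent_gaps_le_mono: "adjacent_gaps_le P D \<Longrightarrow> D \<le> D' \<Longrightarrow> adjacent_gaps_le P D'"
  unfolding adjacent_gaps_le_def by force

lemma exists_leftmost:
  fixes \<mu> :: "nat \<Rightarrow> 'a::linorder"
  shows "m < M \<Longrightarrow> \<exists>l<M. \<forall>j<M. \<mu> l \<le> \<mu> j"
proof -
  assume "m < M"
  then have "Min (\<mu> ` {..<M}) \<in> \<mu> ` {..<M}" by (intro Min_in) auto
  then obtain l where "l < M" "\<mu> l = Min (\<mu> ` {..<M})" by auto
  then show ?thesis by auto
qed

lemma exists_rightmost:
  fixes \<mu> :: "nat \<Rightarrow> 'a::linorder"
  shows "m < M \<Longrightarrow> \<exists>l<M. \<forall>j<M. \<mu> j \<le> \<mu> l"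
proof -
  assume "m < M"
  then have "Max (\<mu> ` {..<M}) \<in> \<mu> ` {..<M}" by (intro Max_in) auto
  then obtain l where "l < M" "\<mu> l = Max (\<mu> ` {..<M})" by auto
  then show ?thesis by auto
qed

lemma listeners_lone_leftmost:
  assumes "0 \<le> \<mu> m" "\<mu> m \<le> 1 - q" "j < M" "\<mu> m < \<mu> j" "\<mu> j \<le> 1"
    and nearest: "\<And>i. i < M \<Longrightarrow> i \<noteq> m \<Longrightarrow> \<mu> j \<le> \<mu> i"
  shows "listeners q M \<mu> m = {0..min 1 (min (\<mu> m + (1 - q)) ((\<mu> m + \<mu> j) / 2))}"
proof -
  define R where "R = min 1 (min (\<mu> m + (1 - q)) ((\<mu> m + \<mu> j) / 2))"
  have "listeners q M \<mu> m \<subseteq> {0..R}"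
  proof
    fix x assume x: "x \<in> listeners q M \<mu> m"
    then show "x \<in> {0..R}"
      using listenersD[OF x] listener_le_midpoint[OF x assms(3,4)] by (auto simp: R_def abs_le_iff)
  qed
  moreover have "{0..R} \<subseteq> listeners q M \<mu> m"
  proof (rule interval_subset_listeners)
    have "R \<le> (\<mu> m + \<mu> j) / 2" unfolding R_def by (intro min.coboundedI2 min.cobounded2)
    then show "\<mu> i = \<mu> m \<or> \<mu> i \<le> 2 * 0 - \<mu> m \<or> 2 * R - \<mu> m \<le> \<mu> i" if "i < M" for i
      using nearest[OF that] by (cases "i = m") auto
  qed (use assms(1,2,4,5) in \<open>auto simp: R_def\<close>)
  ultimately show ?thesis unfolding R_def by (rule equalityI)
qed

lemma leftmost_location_shared:
  assumes eq: "equilibrium q M \<mu>" and m: "m < M" and M: "2 \<le> M"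
    and leftmost: "\<And>j. j < M \<Longrightarrow> \<mu> m \<le> \<mu> j" and near: "\<mu> m < 1 - q"
  shows "\<exists>j<M. j \<noteq> m \<and> \<mu> j = \<mu> m"
proof (rule ccontr)
  assume "\<not> ?thesis"
  then have alone: "\<And>j. j < M \<Longrightarrow> j \<noteq> m \<Longrightarrow> \<mu> m < \<mu> j"
    using leftmost by (metis order_le_less)
  have "(if m = 0 then 1 else 0) \<in> {..<M} - {m}" using M m by auto
  then have "Min (\<mu> ` ({..<M} - {m})) \<in> \<mu> ` ({..<M} - {m})" by (intro Min_in) auto
  then obtain j where "j \<in> {..<M} - {m}" "\<mu> j = Min (\<mu> ` ({..<M} - {m}))" by (metis imageE)
  then have j: "j < M" "j \<noteq> m" and nearest: "\<And>i. i < M \<Longrightarrow> i \<noteq> m \<Longrightarrow> \<mu> j \<le> \<mu> i"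
    by auto
  have loc: "0 \<le> \<mu> m" "\<mu> m < \<mu> j" "\<mu> j \<le> 1"
    using alone[OF j(1,2)] equilibrium_location_range[OF eq] m j(1) by auto
  define y where "y = \<mu> m + min (1 - q - \<mu> m) (\<mu> j - \<mu> m) / 2"
  have y: "\<mu> m < y" "y \<le> 1 - q" "y < \<mu> j"
    using near loc unfolding y_def by (auto simp: min_def field_simps)
  \<comment> \<open>a lone leftmost firm at \<open>z\<close> has listeners \<open>{0..R z}\<close>; \<open>R\<close> increases strictly below 1\<close>
  define R where "R z = min 1 (min (z + (1 - q)) ((z + \<mu> j) / 2))" for z
  have "audience q M \<mu> m = R (\<mu> m)"
    using listeners_lone_leftmost[OF loc(1) _ j(1) loc(2,3) nearest] near loc alone m
    by (subst audience_eq_measure) (force simp: R_def)+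
  moreover have "audience q M (\<mu>(m := y)) m = R y"
    using listeners_lone_leftmost[of "\<mu>(m := y)" m q j M] j y loc nearest m
    by (subst audience_update_eq_measure) (force simp: R_def)+
  moreover have "R (\<mu> m) < R y" using y loc unfolding R_def by (auto simp: min_def)
  ultimately show False using equilibrium_deviation[OF eq m, of y] y loc by simp
qed

lemma rightmost_location_shared:
  assumes eq: "equilibrium q M \<mu>" and m: "m < M" and M: "2 \<le> M"
    and rightmost: "\<And>j. j < M \<Longrightarrow> \<mu> j \<le> \<mu> m" and near: "1 - \<mu> m < 1 - q"
  shows "\<exists>j<M. j \<noteq> m \<and> \<mu> j = \<mu> m"
  using leftmost_location_shared[OF equilibrium_reflect[OF eq] m M] rightmost near by simp

lemma listeners_subset_shift_right:
  assumes "0 \<le> e"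
  shows "listeners q M \<mu> m \<subseteq> {0..\<mu> m + e / 2} \<union> listeners q M (\<mu>(m := \<mu> m + e)) m"
proof
  fix x assume x: "x \<in> listeners q M \<mu> m"
  show "x \<in> {0..\<mu> m + e / 2} \<union> listeners q M (\<mu>(m := \<mu> m + e)) m"
  proof (cases "x \<le> \<mu> m + e / 2")
    case False
    then have closer: "\<bar>x - (\<mu> m + e)\<bar> \<le> \<bar>x - \<mu> m\<bar>" using assms by (auto simp: abs_if)
    have "\<bar>x - (\<mu> m + e)\<bar> \<le> \<bar>x - \<mu> i\<bar>" if "i < M" for i
      using closer listenersD(4)[OF x that] by linarith
    then show ?thesis using closer listenersD[OF x] by (auto simp: listeners_def)
  qed (use listenersD[OF x] in auto)
qed

lemma measure_listeners_le_shift_right: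
  assumes "0 \<le> e" "0 \<le> \<mu> m"
  shows "measure lborel (listeners q M \<mu> m)
    \<le> \<mu> m + e / 2 + measure lborel (listeners q M (\<mu>(m := \<mu> m + e)) m)"
proof -
  have "measure lborel (listeners q M \<mu> m)
      \<le> measure lborel ({0..\<mu> m + e / 2} \<union> listeners q M (\<mu>(m := \<mu> m + e)) m)"
    using listeners_subset_shift_right[OF assms(1)] compact_listeners
    by (intro measure_mono_fmeasurable sets_listeners) (auto intro!: fmeasurable_compact)
  also have "\<dots> \<le> measure lborel {0..\<mu> m + e / 2}
      + measure lborel (listeners q M (\<mu>(m := \<mu> m + e)) m)"
    by (intro measure_Un_le sets_listeners) auto
  finally show ?thesis using assms by simp
qed

lemma audience_le_leftmost_location:
  assumes eq: "equilibrium q M \<mu>" and m: "m < M" and leftmost: "\<And>j. j < M \<Longrightarrow> \<mu> m \<le> \<mu> j"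
    and shared: "j < M" "j \<noteq> m" "\<mu> j = \<mu> m" and "\<mu> m < 1"
  shows "audience q M \<mu> m \<le> \<mu> m"
proof -
  define S where "S = measure lborel (listeners q M \<mu> m)"
  define A where "A = audience q M \<mu> m"
  define p where "p = Min (insert 1 (\<mu> ` {..<M} - {\<mu> m}))"
  have p_le: "\<And>i. i < M \<Longrightarrow> \<mu> i \<noteq> \<mu> m \<Longrightarrow> p \<le> \<mu> i" and "p \<le> 1"
    unfolding p_def by (auto intro: Min_le)
  have "p \<in> insert 1 (\<mu> ` {..<M} - {\<mu> m})" unfolding p_def by (intro Min_in) auto
  then have "\<mu> m < p" using leftmost \<open>\<mu> m < 1\<close> by (force simp: order_le_less)
  have "0 \<le> \<mu> m" using equilibrium_location_range[OF eq m] by simp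
  have S_le: "S \<le> \<mu> m + e / 2 + A" if e: "0 < e" "e < p - \<mu> m" for e
  proof -
    have "\<mu> i \<noteq> \<mu> m + e" if "i < M" "i \<noteq> m" for i
      using p_le[OF that(1)] e by (cases "\<mu> i = \<mu> m") auto
    then have "audience q M (\<mu>(m := \<mu> m + e)) m = measure lborel (listeners q M (\<mu>(m := \<mu> m + e)) m)"
      using m by (intro audience_update_eq_measure) auto
    moreover have "audience q M (\<mu>(m := \<mu> m + e)) m \<le> A"
      unfolding A_def using equilibrium_deviation[OF eq m] e \<open>0 \<le> \<mu> m\<close> \<open>p \<le> 1\<close> by simp
    ultimately show ?thesis
      using measure_listeners_le_shift_right[of e \<mu> m q M] e \<open>0 \<le> \<mu> m\<close> unfolding S_def by simp
  qed
  have "S \<le> \<mu> m + A"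
  proof (rule field_le_epsilon)
    fix e :: real assume "0 < e"
    define e' where "e' = min e ((p - \<mu> m) / 2)"
    have "0 < e'" using \<open>0 < e\<close> \<open>\<mu> m < p\<close> by (simp add: e'_def)
    moreover have "e' < p - \<mu> m" using \<open>\<mu> m < p\<close> unfolding e'_def by argo
    moreover have "e' \<le> e" unfolding e'_def by simp
    ultimately show "S \<le> \<mu> m + A + e" using S_le[of e'] by linarith
  qed
  moreover have "A \<le> S / 2" unfolding A_def S_def by (rule audience_le_half_measure[OF m shared])
  ultimately show ?thesis unfolding A_def by simp
qed

lemma gaps_le_twice_audience:
  assumes eq: "equilibrium q M \<mu>" and m: "m < M" and A: "audience q M \<mu> m \<le> A" "A < 2 * (1 - q)"
  shows "adjacent_gaps_le (\<mu> ` {..<M}) (2 * A)"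
  unfolding adjacent_gaps_le_def
proof (intro ballI impI)
  fix pj pl assume "pj \<in> \<mu> ` {..<M}" "pl \<in> \<mu> ` {..<M}" and "pj < pl"
    and between: "\<forall>z\<in>\<mu> ` {..<M}. z \<le> pj \<or> pl \<le> z"
  then have range: "0 \<le> pj" "pl \<le> 1" using equilibrium_location_range[OF eq] by auto
  show "pl - pj \<le> 2 * A"
  proof (rule ccontr)
    assume gap: "\<not> pl - pj \<le> 2 * A"
    define y where "y = (pj + pl) / 2"
    define w where "w = min ((pl - pj) / 4) (1 - q)"
    have w: "A < 2 * w" "w \<le> (pl - pj) / 4" "w \<le> 1 - q"
      using gap A(2) unfolding w_def by (auto simp: min_def)
    have others: "\<mu> i \<le> pj \<or> pl \<le> \<mu> i" if "i < M" for i using between that by auto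
    have "pj \<le> y - 2 * w" using w unfolding y_def by argo
    have "y + 2 * w \<le> pl" using w unfolding y_def by argo
    have "0 < w" using audience_nonneg[of q M \<mu> m] A(1) w(1) by linarith
    have "{y - w..y + w} \<subseteq> listeners q M (\<mu>(m := y)) m"
    proof (rule interval_subset_listeners)
      fix i assume "i < M"
      then show "(\<mu>(m := y)) i = (\<mu>(m := y)) m \<or> (\<mu>(m := y)) i \<le> 2 * (y - w) - (\<mu>(m := y)) m \<or>
          2 * (y + w) - (\<mu>(m := y)) m \<le> (\<mu>(m := y)) i"
        using others[of i] \<open>pj \<le> y - 2 * w\<close> \<open>y + 2 * w \<le> pl\<close> by auto
    qed (use w range \<open>0 < w\<close> \<open>pj \<le> y - 2 * w\<close> \<open>y + 2 * w \<le> pl\<close> in auto)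
    then have "2 * w \<le> measure lborel (listeners q M (\<mu>(m := y)) m)"
      using measure_listeners_ge by fastforce
    also have "\<dots> = audience q M (\<mu>(m := y)) m"
      using others m \<open>pj \<le> y - 2 * w\<close> \<open>y + 2 * w \<le> pl\<close> \<open>0 < w\<close>
      by (intro audience_update_eq_measure[symmetric]) force+
    also have "\<dots> \<le> audience q M \<mu> m"
      using equilibrium_deviation[OF eq m] range \<open>pj < pl\<close> by (simp add: y_def)
    finally show False using w A(1) by simp
  qed
qed

lemma rightmost_location_ge:
  assumes eq: "equilibrium q M \<mu>" and m: "m < M" and A: "audience q M \<mu> m \<le> A" "A < 1 - q"
    and rightmost: "\<And>j. j < M \<Longrightarrow> \<mu> j \<le> p"
  shows "1 - p \<le> A"
proof (rule ccontr)
  assume far: "\<not> 1 - p \<le> A"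
  define y where "y = 1 - A"
  define w where "w = min ((y - p) / 2) (1 - q)"
  have "0 \<le> A" using A(1) audience_nonneg order_trans by blast
  have "0 \<le> p" using rightmost[OF m] equilibrium_location_range[OF eq m] by simp
  with \<open>0 \<le> A\<close> have y: "p < y" "0 \<le> y" "y \<le> 1" "1 - y < 1 - q"
    using far A(2) by (auto simp: y_def)
  have w: "0 < w" "w \<le> (y - p) / 2" "w \<le> 1 - q" using y unfolding w_def by (auto simp: min_def)
  have "{y - w..1} \<subseteq> listeners q M (\<mu>(m := y)) m"
  proof (rule interval_subset_listeners)
    fix i assume "i < M"
    then show "(\<mu>(m := y)) i = (\<mu>(m := y)) m \<or> (\<mu>(m := y)) i \<le> 2 * (y - w) - (\<mu>(m := y)) m \<or>
        2 * 1 - (\<mu>(m := y)) m \<le> (\<mu>(m := y)) i"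
      using rightmost[of i] w by auto
  qed (use w y \<open>0 \<le> p\<close> in auto)
  then have "1 - (y - w) \<le> measure lborel (listeners q M (\<mu>(m := y)) m)"
    by (rule measure_listeners_ge)
  also have "\<dots> = audience q M (\<mu>(m := y)) m"
    using rightmost y m by (intro audience_update_eq_measure[symmetric]) force+
  also have "\<dots> \<le> A"
    using equilibrium_deviation[OF eq m y(2,3)] A(1) by linarith
  finally show False using w by (simp add: y_def)
qed

lemma unit_interval_subset_cballs:
  fixes P :: "real set"
  assumes "finite P" "0 \<le> c" and left: "a \<in> P" "a \<le> c" and right: "b \<in> P" "1 - b \<le> c"
    and gaps: "adjacent_gaps_le P (2 * c)"
  shows "{0..1} \<subseteq> (\<Union>p\<in>P. {p - c..p + c})"
proof
  fix x :: real assume x: "x \<in> {0..1}"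
  consider "x \<le> a" | "b \<le> x" | "a < x" "x < b" by linarith
  then show "x \<in> (\<Union>p\<in>P. {p - c..p + c})"
  proof cases
    case 1
    then have "x \<in> {a - c..a + c}" using x \<open>0 \<le> c\<close> left(2) by auto
    then show ?thesis using left(1) by blast
  next
    case 2
    then have "x \<in> {b - c..b + c}" using x \<open>0 \<le> c\<close> right(2) by auto
    then show ?thesis using right(1) by blast
  next
    case 3
    define pl where "pl = Max {p \<in> P. p \<le> x}"
    define pr where "pr = Min {p \<in> P. x \<le> p}"
    have "pl \<in> {p \<in> P. p \<le> x}"
      unfolding pl_def using \<open>finite P\<close> left(1) 3 by (intro Max_in) auto
    then have pl: "pl \<in> P" "pl \<le> x" by auto
    have "pr \<in> {p \<in> P. x \<le> p}"
      unfolding pr_def using \<open>finite P\<close> right(1) 3 by (intro Min_in) auto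
    then have pr: "pr \<in> P" "x \<le> pr" by auto
    have "z \<le> pl \<or> pr \<le> z" if "z \<in> P" for z
      using that \<open>finite P\<close> by (cases "z \<le> x") (auto simp: pl_def pr_def)
    then have "pl < pr \<Longrightarrow> pr - pl \<le> 2 * c"
      using gaps pl pr unfolding adjacent_gaps_le_def by blast
    then have "x \<in> {pl - c..pl + c} \<or> x \<in> {pr - c..pr + c}"
      using pl pr \<open>0 \<le> c\<close> by (cases "pl < pr") auto
    then show ?thesis using pl pr by blast
  qed
qed

lemma one_le_diameter_mult_card:
  fixes P :: "real set"
  assumes "finite P" "0 \<le> c" "{0..1} \<subseteq> (\<Union>p\<in>P. {p - c..p + c})"
  shows "1 \<le> 2 * c * card P"
proof -
  have "1 = measure lborel {0..1::real}" by simp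
  also have "\<dots> \<le> measure lborel (\<Union>p\<in>P. {p - c..p + c})"
    using assms by (intro measure_mono_fmeasurable) (auto intro!: fmeasurable_compact compact_UN)
  also have "\<dots> \<le> (\<Sum>p\<in>P. measure lborel {p - c..p + c})"
    using \<open>finite P\<close> by (intro measure_UNION_le) auto
  also have "\<dots> = 2 * c * card P" using \<open>0 \<le> c\<close> by simp
  finally show ?thesis .
qed

lemma card_image_le_minus_2:
  assumes "m < M" "j < M" "j \<noteq> m" "\<mu> j = \<mu> m" and "m' < M" "j' < M" "j' \<noteq> m'" "\<mu> j' = \<mu> m'"
    and "\<mu> m \<noteq> \<mu> m'"
  shows "card (\<mu> ` {..<M}) \<le> M - 2"
proof -
  have "\<mu> ` {..<M} \<subseteq> \<mu> ` ({..<M} - {j, j'})"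
  proof
    fix p assume "p \<in> \<mu> ` {..<M}"
    then obtain i where i: "i < M" "p = \<mu> i" by auto
    consider "i = j" | "i = j'" | "i \<notin> {j, j'}" by blast
    then show "p \<in> \<mu> ` ({..<M} - {j, j'})"
    proof cases
      case 1
      then have "p = \<mu> m" "m \<in> {..<M} - {j, j'}" using i assms by auto
      then show ?thesis by blast
    next
      case 2
      then have "p = \<mu> m'" "m' \<in> {..<M} - {j, j'}" using i assms by auto
      then show ?thesis by blast
    qed (use i in auto)
  qed
  then have "card (\<mu> ` {..<M}) \<le> card (\<mu> ` ({..<M} - {j, j'}))" by (intro card_mono) auto
  also have "\<dots> \<le> card ({..<M} - {j, j'})" by (rule card_image_le) simp
  also have "\<dots> = M - 2"
  proof -
    have "j \<noteq> j'" using assms by auto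
    then show ?thesis using assms by (simp add: card_Diff_subset)
  qed
  finally show ?thesis .
qed

theorem equilibrium_location_ge:
  assumes eq: "equilibrium q M \<mu>" and "5 < M" and m: "m < M"
  shows "min (1 - q) (1 / (2 * (real M - 2))) \<le> \<mu> m"
proof (rule ccontr)
  assume low: "\<not> min (1 - q) (1 / (2 * (real M - 2))) \<le> \<mu> m"
  obtain l where l: "l < M" and leftmost: "\<And>j. j < M \<Longrightarrow> \<mu> l \<le> \<mu> j"
    using exists_leftmost[OF m] by blast
  obtain k where k: "k < M" and rightmost: "\<And>j. j < M \<Longrightarrow> \<mu> j \<le> \<mu> k"
    using exists_rightmost[OF m] by blast
  define c where "c = \<mu> l"
  have "1 / (2 * (real M - 2)) \<le> 1 / 8" using \<open>5 < M\<close> by (simp add: field_simps)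
  then have c: "c < 1 - q" "c < 1 / (2 * (real M - 2))" "c < 1 / 8" "0 \<le> c"
    using low leftmost[OF m] equilibrium_location_range[OF eq l] by (auto simp: c_def)
  obtain j where j: "j < M" "j \<noteq> l" "\<mu> j = \<mu> l"
    using leftmost_location_shared[OF eq l _ leftmost] \<open>5 < M\<close> c(1) by (auto simp: c_def)
  have A: "audience q M \<mu> l \<le> c"
    using audience_le_leftmost_location[OF eq l leftmost j] c(3) by (simp add: c_def)
  have "1 - \<mu> k \<le> c" by (rule rightmost_location_ge[OF eq l A c(1) rightmost])
  obtain j' where j': "j' < M" "j' \<noteq> k" "\<mu> j' = \<mu> k"
    using rightmost_location_shared[OF eq k _ rightmost] \<open>5 < M\<close> \<open>1 - \<mu> k \<le> c\<close> c(1) by auto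
  have "adjacent_gaps_le (\<mu> ` {..<M}) (2 * c)"
    using gaps_le_twice_audience[OF eq l A] c(1,4) by simp
  then have "{0..1} \<subseteq> (\<Union>p\<in>\<mu> ` {..<M}. {p - c..p + c})"
    using l k \<open>1 - \<mu> k \<le> c\<close> c(4)
    by (intro unit_interval_subset_cballs[where a = c and b = "\<mu> k"]) (auto simp: c_def)
  then have "1 \<le> 2 * c * card (\<mu> ` {..<M})"
    using c(4) by (intro one_le_diameter_mult_card) auto
  also have "card (\<mu> ` {..<M}) \<le> M - 2"
    using card_image_le_minus_2[OF l j k j'] \<open>1 - \<mu> k \<le> c\<close> c(3) by (auto simp: c_def)
  then have "2 * c * card (\<mu> ` {..<M}) \<le> 2 * c * (real M - 2)"
    using c(4) \<open>5 < M\<close> by (intro mult_left_mono) (auto simp: of_nat_diff)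
  also have "\<dots> < 1" using c(2) \<open>5 < M\<close> by (simp add: field_simps)
  finally show False by simp
qed

section \<open>Audience after a deviation\<close>

abbreviation rival_locations :: "nat \<Rightarrow> (nat \<Rightarrow> real) \<Rightarrow> nat \<Rightarrow> real set" where
  "rival_locations M \<mu> i \<equiv> \<mu> ` ({..<M} - {i})"

lemma nearest_below:
  fixes S :: "'a::linorder set"
  assumes "finite S" "p \<in> S" "p < y"
  shows "\<exists>pl\<in>S. pl < y \<and> (\<forall>z\<in>S. z < y \<longrightarrow> z \<le> pl)"
proof -
  have "Max {z \<in> S. z < y} \<in> {z \<in> S. z < y}" using assms by (intro Max_in) auto
  then show ?thesis using assms(1) by (intro bexI[of _ "Max {z \<in> S. z < y}"]) auto
qed

lemma nearest_above:
  fixes S :: "'a::linorder set"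
  assumes "finite S" "p \<in> S" "y < p"
  shows "\<exists>pr\<in>S. y < pr \<and> (\<forall>z\<in>S. y < z \<longrightarrow> pr \<le> z)"
proof -
  have "Min {z \<in> S. y < z} \<in> {z \<in> S. y < z}" using assms by (intro Min_in) auto
  then show ?thesis using assms(1) by (intro bexI[of _ "Min {z \<in> S. y < z}"]) auto
qed

lemma deviation_listener_ge_midpoint:
  assumes "x \<in> listeners q M (\<mu>(i := y)) i" "p \<in> rival_locations M \<mu> i" "p < y"
  shows "(p + y) / 2 \<le> x"
proof -
  obtain j where "j < M" "j \<noteq> i" "p = \<mu> j" using assms(2) by auto
  then show ?thesis using listener_ge_midpoint[OF assms(1), of j] assms(3) by simp
qed

lemma deviation_listener_le_midpoint:
  assumes "x \<in> listeners q M (\<mu>(i := y)) i" "p \<in> rival_locations M \<mu> i" "y < p"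
  shows "x \<le> (y + p) / 2"
proof -
  obtain j where "j < M" "j \<noteq> i" "p = \<mu> j" using assms(2) by auto
  then show ?thesis using listener_le_midpoint[OF assms(1), of j] assms(3) by simp
qed

lemma deviation_audience_le_between:
  assumes "i < M" "pl \<in> rival_locations M \<mu> i" "pr \<in> rival_locations M \<mu> i" "pl < y" "y < pr"
  shows "audience q M (\<mu>(i := y)) i \<le> (pr - pl) / 2"
proof -
  have "listeners q M (\<mu>(i := y)) i \<subseteq> {(pl + y) / 2..(y + pr) / 2}"
    using deviation_listener_ge_midpoint[OF _ assms(2,4)] deviation_listener_le_midpoint[OF _ assms(3,5)]
    by auto
  then have "measure lborel (listeners q M (\<mu>(i := y)) i) \<le> (y + pr) / 2 - (pl + y) / 2"
    using assms(4,5) by (intro measure_listeners_le) auto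
  then show ?thesis using audience_le_measure[OF assms(1), of q "\<mu>(i := y)"] by argo
qed

lemma deviation_audience_le_left_of_rivals:
  assumes "i < M" "0 \<le> y" "q \<le> 1" "\<forall>p\<in>rival_locations M \<mu> i. y < p"
    and b: "b \<in> rival_locations M \<mu> i" "b + min (1 - q) b \<le> D"
  shows "audience q M (\<mu>(i := y)) i \<le> D / 2"
proof -
  define lo where "lo = max 0 (y - (1 - q))"
  have "y < b" using assms(4) b(1) by blast
  have "listeners q M (\<mu>(i := y)) i \<subseteq> {lo..(y + b) / 2}"
  proof
    fix x assume x: "x \<in> listeners q M (\<mu>(i := y)) i"
    have "lo \<le> x" using listenersD(1,3)[OF x] by (simp add: lo_def abs_le_iff)
    then show "x \<in> {lo..(y + b) / 2}" using deviation_listener_le_midpoint[OF x b(1) \<open>y < b\<close>] by simp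
  qed
  then have "measure lborel (listeners q M (\<mu>(i := y)) i) \<le> (y + b) / 2 - lo"
    using \<open>y < b\<close> assms(2,3) by (intro measure_listeners_le) (auto simp: lo_def max_def)
  also have "\<dots> \<le> D / 2"
  proof (cases "y \<le> 1 - q")
    case True
    then have "lo = 0" "b + y \<le> D" using \<open>y < b\<close> b(2) by (auto simp: lo_def min_def split: if_splits)
    then show ?thesis by argo
  next
    case False
    then have "lo = y - (1 - q)" "b + (1 - q) \<le> D" using \<open>y < b\<close> b(2) by (auto simp: lo_def min_def)
    then show ?thesis using False by argo
  qed
  finally show ?thesis using audience_le_measure[OF assms(1), of q "\<mu>(i := y)"] by linarith
qed

lemma deviation_audience_le_right_of_rivals:
  assumes "i < M" "y \<le> 1" "q \<le> 1" "\<forall>p\<in>rival_locations M \<mu> i. p < y"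
    and b: "b \<in> rival_locations M \<mu> i" "(1 - b) + min (1 - q) (1 - b) \<le> D"
  shows "audience q M (\<mu>(i := y)) i \<le> D / 2"
proof -
  define \<nu> where "\<nu> = (\<lambda>j. 1 - \<mu> j)"
  have "\<nu>(i := 1 - y) = (\<lambda>j. 1 - (\<mu>(i := y)) j)" by (auto simp: \<nu>_def)
  then have "audience q M (\<mu>(i := y)) i = audience q M (\<nu>(i := 1 - y)) i"
    by (simp only: audience_reflect)
  also have "\<dots> \<le> D / 2"
  proof (rule deviation_audience_le_left_of_rivals)
    show "\<forall>p\<in>rival_locations M \<nu> i. 1 - y < p" using assms(4) by (auto simp: \<nu>_def)
    show "1 - b \<in> rival_locations M \<nu> i" using b(1) by (auto simp: \<nu>_def)
  qed (use assms b(2) in auto)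
  finally show ?thesis .
qed

lemma deviation_listener_ge_tie:
  assumes x: "x \<in> listeners q M (\<mu>(i := y)) i" and tie: "y \<in> rival_locations M \<mu> i"
    and gaps: "adjacent_gaps_le (rival_locations M \<mu> i) D"
    and left: "bL \<in> rival_locations M \<mu> i" "\<forall>p\<in>rival_locations M \<mu> i. bL \<le> p"
      "bL + min (1 - q) bL \<le> D"
  shows "y - D / 2 \<le> x"
proof (cases "\<exists>p\<in>rival_locations M \<mu> i. p < y")
  case True
  then obtain pl where pl: "pl \<in> rival_locations M \<mu> i" "pl < y"
    "\<forall>z\<in>rival_locations M \<mu> i. z < y \<longrightarrow> z \<le> pl"
    using nearest_below[of "rival_locations M \<mu> i"] by blast
  then have "\<forall>z\<in>rival_locations M \<mu> i. z \<le> pl \<or> y \<le> z" by (meson not_le)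
  then have "y - pl \<le> D" using gaps tie pl(1,2) unfolding adjacent_gaps_le_def by blast
  then show ?thesis using deviation_listener_ge_midpoint[OF x pl(1,2)] by argo
next
  case False
  then have "y = bL" using left(1,2) tie by force
  moreover have "0 \<le> x" "y - x \<le> 1 - q" using listenersD(1,3)[OF x] by (auto simp: abs_le_iff)
  ultimately show ?thesis using left(3) by (auto simp: min_def split: if_splits)
qed

lemma deviation_listener_le_tie:
  assumes x: "x \<in> listeners q M (\<mu>(i := y)) i" and tie: "y \<in> rival_locations M \<mu> i"
    and gaps: "adjacent_gaps_le (rival_locations M \<mu> i) D"
    and right: "bR \<in> rival_locations M \<mu> i" "\<forall>p\<in>rival_locations M \<mu> i. p \<le> bR"
      "(1 - bR) + min (1 - q) (1 - bR) \<le> D"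
  shows "x \<le> y + D / 2"
proof (cases "\<exists>p\<in>rival_locations M \<mu> i. y < p")
  case True
  then obtain pr where pr: "pr \<in> rival_locations M \<mu> i" "y < pr"
    "\<forall>z\<in>rival_locations M \<mu> i. y < z \<longrightarrow> pr \<le> z"
    using nearest_above[of "rival_locations M \<mu> i"] by blast
  then have "\<forall>z\<in>rival_locations M \<mu> i. z \<le> y \<or> pr \<le> z" by (meson not_le)
  then have "pr - y \<le> D" using gaps tie pr(1,2) unfolding adjacent_gaps_le_def by blast
  then show ?thesis using deviation_listener_le_midpoint[OF x pr(1,2)] by argo
next
  case False
  then have "y = bR" using right(1,2) tie by force
  moreover have "x \<le> 1" "x - y \<le> 1 - q" using listenersD(2,3)[OF x] by (auto simp: abs_le_iff)
  ultimately show ?thesis using right(3) by (auto simp: min_def split: if_splits)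
qed

lemma deviation_audience_le_tie:
  assumes i: "i < M" and "0 \<le> D" and tie: "y \<in> rival_locations M \<mu> i"
    and gaps: "adjacent_gaps_le (rival_locations M \<mu> i) D"
    and left: "bL \<in> rival_locations M \<mu> i" "\<forall>p\<in>rival_locations M \<mu> i. bL \<le> p"
      "bL + min (1 - q) bL \<le> D"
    and right: "bR \<in> rival_locations M \<mu> i" "\<forall>p\<in>rival_locations M \<mu> i. p \<le> bR"
      "(1 - bR) + min (1 - q) (1 - bR) \<le> D"
  shows "audience q M (\<mu>(i := y)) i \<le> D / 2"
proof -
  have "listeners q M (\<mu>(i := y)) i \<subseteq> {y - D / 2..y + D / 2}"
    using deviation_listener_ge_tie[OF _ tie gaps left] deviation_listener_le_tie[OF _ tie gaps right]
    by auto
  then have "measure lborel (listeners q M (\<mu>(i := y)) i) \<le> D"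
    using measure_listeners_le[of q M "\<mu>(i := y)" i "y - D / 2" "y + D / 2"] \<open>0 \<le> D\<close> by simp
  moreover obtain j where "j < M" "j \<noteq> i" "\<mu> j = y" using tie by auto
  then have "audience q M (\<mu>(i := y)) i \<le> measure lborel (listeners q M (\<mu>(i := y)) i) / 2"
    using i by (intro audience_le_half_measure) auto
  ultimately show ?thesis by linarith
qed

text \<open>The conditions on the outermost rival locations \<open>bL\<close> and \<open>bR\<close> bound the audience of a
  jump beyond all rivals, where the listeners are cut off by the end of \<open>[0, 1]\<close> and by the
  radius \<open>1 - q\<close>.\<close>

lemma deviation_audience_le:
  assumes i: "i < M" and y: "0 \<le> y" "y \<le> 1" and "q \<le> 1" "0 \<le> D"
    and gaps: "adjacent_gaps_le (rival_locations M \<mu> i) D"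
    and left: "bL \<in> rival_locations M \<mu> i" "\<forall>p\<in>rival_locations M \<mu> i. bL \<le> p"
      "bL + min (1 - q) bL \<le> D"
    and right: "bR \<in> rival_locations M \<mu> i" "\<forall>p\<in>rival_locations M \<mu> i. p \<le> bR"
      "(1 - bR) + min (1 - q) (1 - bR) \<le> D"
  shows "audience q M (\<mu>(i := y)) i \<le> D / 2"
proof -
  let ?R = "rival_locations M \<mu> i"
  consider "y \<in> ?R" | "\<forall>p\<in>?R. y < p" | "\<forall>p\<in>?R. p < y" | "y \<notin> ?R" "\<exists>p\<in>?R. p < y" "\<exists>p\<in>?R. y < p"
    by (metis linorder_neqE_linordered_idom)
  then show ?thesis
  proof cases
    case 1
    then show ?thesis by (rule deviation_audience_le_tie[OF i \<open>0 \<le> D\<close> _ gaps left right])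
  next
    case 2
    then show ?thesis
      using deviation_audience_le_left_of_rivals[OF i y(1) \<open>q \<le> 1\<close> _ left(1,3)] by blast
  next
    case 3
    then show ?thesis
      using deviation_audience_le_right_of_rivals[OF i y(2) \<open>q \<le> 1\<close> _ right(1,3)] by blast
  next
    case 4
    obtain pl where pl: "pl \<in> ?R" "pl < y" "\<forall>z\<in>?R. z < y \<longrightarrow> z \<le> pl"
      using nearest_below[of ?R] 4 by blast
    obtain pr where pr: "pr \<in> ?R" "y < pr" "\<forall>z\<in>?R. y < z \<longrightarrow> pr \<le> z"
      using nearest_above[of ?R] 4 by blast
    have "\<forall>z\<in>?R. z \<le> pl \<or> pr \<le> z" using pl pr 4(1) by (metis linorder_neqE_linordered_idom)
    then have "pr - pl \<le> D" using gaps pl(1,2) pr(1,2) unfolding adjacent_gaps_le_def by force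
    then show ?thesis using deviation_audience_le_between[OF i pl(1) pr(1) pl(2) pr(2), where q = q]
      by argo
  qed
qed

section \<open>Equilibria attaining the bound\<close>

locale evenly_spread =
  fixes r :: real and M :: nat
  assumes M: "5 < M" and r: "0 \<le> r" "r < 1 / (2 * (real M - 2))"
begin

definition spacing :: real where "spacing = (1 - 2 * r) / (real M - 1)"

definition spread :: "nat \<Rightarrow> real" where "spread j = r + spacing * real j"

lemma r_less_spacing: "r < spacing"
proof -
  have "r * (real M + 1) \<le> r * (2 * (real M - 2))" using r(1) M by (intro mult_left_mono) auto
  also have "\<dots> < 1" using r(2) M by (simp add: field_simps)
  finally have "r * (real M - 1) < 1 - 2 * r" by argo
  then show ?thesis using M by (simp add: spacing_def field_simps)
qed

lemma spacing_pos: "0 < spacing"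
  using r_less_spacing r(1) by simp

lemma spread_diff: "spread l - spread j = spacing * (real l - real j)"
  unfolding spread_def by (simp add: algebra_simps)

lemma spread_last: "spread (M - 1) = 1 - r"
  using M unfolding spread_def spacing_def by (simp add: of_nat_diff)

lemma spread_step: "j < l \<Longrightarrow> spread j + spacing \<le> spread l"
proof -
  assume "j < l"
  then have "spacing * (real j + 1) \<le> spacing * real l" using spacing_pos by (intro mult_left_mono) auto
  then show ?thesis unfolding spread_def by (simp add: algebra_simps)
qed

lemma spread_less: "j < l \<Longrightarrow> spread j < spread l"
  using spread_step spacing_pos by fastforce

lemma spread_less_iff: "spread j < spread l \<longleftrightarrow> j < l"
  using spread_less[of j l] spread_less[of l j] by (cases j l rule: linorder_cases) auto

lemma spread_inj: "spread j = spread l \<longleftrightarrow> j = l"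
  using spread_less[of j l] spread_less[of l j] by (cases j l rule: linorder_cases) auto

lemma spread_dist: "j \<noteq> l \<Longrightarrow> spacing \<le> \<bar>spread j - spread l\<bar>"
  using spread_step[of j l] spread_step[of l j] by (cases j l rule: linorder_cases) auto

lemma spread_first: "spread 0 = r"
  by (simp add: spread_def)

lemma spread_mono: "j \<le> l \<Longrightarrow> spread j \<le> spread l"
  using spread_less[of j l] by (cases "j = l") auto

lemma spread_range: "j < M \<Longrightarrow> r \<le> spread j \<and> spread j \<le> 1 - r"
  using spread_mono[of 0 j] spread_mono[of j "M - 1"] spread_first spread_last by simp

lemma spread_inner: "0 < j \<Longrightarrow> j < M - 1 \<Longrightarrow> r + spacing \<le> spread j \<and> spread j + spacing \<le> 1 - r"
  using spread_step[of 0 j] spread_step[of j "M - 1"] spread_first spread_last by auto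

definition half_width :: real where "half_width = min r (spacing / 2)"

lemma half_width: "0 \<le> half_width" "half_width \<le> r" "2 * half_width \<le> spacing"
  using r(1) spacing_pos by (auto simp: half_width_def)

lemma r_plus_half_width: "r + half_width \<le> 1 - r"
proof -
  have "r + spacing \<le> spread 1 \<and> spread 1 + spacing \<le> 1 - r" using M by (intro spread_inner) auto
  then show ?thesis using half_width spacing_pos by linarith
qed

definition guaranteed :: "nat \<Rightarrow> real" where
  "guaranteed i = (if i = 0 \<or> i = M - 1 then r + half_width else 2 * half_width)"

lemma audience_spread:
  "i < M \<Longrightarrow> audience (1 - r) M spread i = measure lborel (listeners (1 - r) M spread i)"
  by (rule audience_eq_measure) (auto simp: spread_inj)

lemma first_listeners: "{0..r + half_width} \<subseteq> listeners (1 - r) M spread 0"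
proof (rule interval_subset_listeners)
  fix j assume "j < M"
  show "spread j = spread 0 \<or> spread j \<le> 2 * 0 - spread 0 \<or> 2 * (r + half_width) - spread 0 \<le> spread j"
    using spread_step[of 0 j] half_width spread_first by (cases "j = 0") auto
qed (use half_width r_plus_half_width spread_first in auto)

lemma last_listeners: "{1 - r - half_width..1} \<subseteq> listeners (1 - r) M spread (M - 1)"
proof (rule interval_subset_listeners)
  fix j assume "j < M"
  show "spread j = spread (M - 1) \<or> spread j \<le> 2 * (1 - r - half_width) - spread (M - 1) \<or>
      2 * 1 - spread (M - 1) \<le> spread j"
  proof (cases "j = M - 1")
    case False
    then have "j < M - 1" using \<open>j < M\<close> by linarith
    then show ?thesis using spread_step[of j "M - 1"] half_width spread_last by auto
  qed simp
qed (use half_width r_plus_half_width spread_last in auto)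

lemma inner_listeners:
  assumes "0 < i" "i < M - 1"
  shows "{spread i - half_width..spread i + half_width} \<subseteq> listeners (1 - r) M spread i"
proof (rule interval_subset_listeners)
  fix j assume "j < M"
  show "spread j = spread i \<or> spread j \<le> 2 * (spread i - half_width) - spread i \<or>
      2 * (spread i + half_width) - spread i \<le> spread j"
    using spread_dist[of j i] half_width by (cases "j = i") auto
qed (use spread_inner[OF assms] half_width r(1) in auto)

lemma guaranteed_le_audience:
  assumes "i < M"
  shows "guaranteed i \<le> audience (1 - r) M spread i"
proof -
  consider "i = 0" | "i = M - 1" | "0 < i" "i < M - 1" using assms by linarith
  then have "guaranteed i \<le> measure lborel (listeners (1 - r) M spread i)"
  proof cases
    case 1
    then show ?thesis using measure_listeners_ge[OF first_listeners] by (simp add: guaranteed_def)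
  next
    case 2
    then show ?thesis using measure_listeners_ge[OF last_listeners] by (simp add: guaranteed_def)
  next
    case 3
    then show ?thesis using measure_listeners_ge[OF inner_listeners[OF 3]] by (simp add: guaranteed_def)
  qed
  then show ?thesis using audience_spread[OF assms] by simp
qed

lemma adjacent_gaps_spread: "adjacent_gaps_le (rival_locations M spread i) (2 * spacing)"
  unfolding adjacent_gaps_le_def
proof (intro ballI impI)
  fix p p' assume "p \<in> rival_locations M spread i" "p' \<in> rival_locations M spread i" "p < p'"
    and between: "\<forall>z\<in>rival_locations M spread i. z \<le> p \<or> p' \<le> z"
  obtain j l where jl: "j < M" "l < M" "j \<noteq> i" "l \<noteq> i" "p = spread j" "p' = spread l"
    using \<open>p \<in> rival_locations M spread i\<close> \<open>p' \<in> rival_locations M spread i\<close> by auto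
  then have "j < l" using \<open>p < p'\<close> spread_less_iff by simp
  have "l \<le> j + 2"
  proof (rule ccontr)
    assume "\<not> l \<le> j + 2"
    define k where "k = (if j + 1 = i then j + 2 else j + 1)"
    have "k < M" "k \<noteq> i" "j < k" "k < l" using jl \<open>j < l\<close> \<open>\<not> l \<le> j + 2\<close> by (auto simp: k_def)
    then have "spread k \<in> rival_locations M spread i" "p < spread k" "spread k < p'"
      using spread_less jl by auto
    then have "spread k \<le> p \<or> p' \<le> spread k" using between by blast
    then show False using \<open>p < spread k\<close> \<open>spread k < p'\<close> by linarith
  qed
  then have "spacing * (real l - real j) \<le> spacing * 2" using spacing_pos by (intro mult_left_mono) auto
  then show "p' - p \<le> 2 * spacing" using spread_diff[of l j] jl by simp
qed

lemma spread_neighbours: "spread 1 = r + spacing" "spread (M - 2) = 1 - r - spacing"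
  using spread_diff[of "M - 1" "M - 2"] spread_last M by (auto simp: spread_def of_nat_diff)

definition leftmost_rival :: "nat \<Rightarrow> real" where
  "leftmost_rival i = (if i = 0 then spread 1 else spread 0)"

definition rightmost_rival :: "nat \<Rightarrow> real" where
  "rightmost_rival i = (if i = M - 1 then spread (M - 2) else spread (M - 1))"

lemma leftmost_rival:
  "i < M \<Longrightarrow> leftmost_rival i \<in> rival_locations M spread i"
  "p \<in> rival_locations M spread i \<Longrightarrow> leftmost_rival i \<le> p"
  using M spread_mono by (auto simp: leftmost_rival_def)

lemma rightmost_rival:
  "i < M \<Longrightarrow> rightmost_rival i \<in> rival_locations M spread i"
  "p \<in> rival_locations M spread i \<Longrightarrow> p \<le> rightmost_rival i"
proof -
  show "i < M \<Longrightarrow> rightmost_rival i \<in> rival_locations M spread i"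
    using M by (auto simp: rightmost_rival_def)
  assume "p \<in> rival_locations M spread i"
  then obtain j where j: "j < M" "j \<noteq> i" "p = spread j" by auto
  then have "j \<le> (if i = M - 1 then M - 2 else M - 1)" by auto
  then show "p \<le> rightmost_rival i"
    using spread_mono j(3) unfolding rightmost_rival_def by (cases "i = M - 1") auto
qed

lemma deviation_audience_le_guaranteed:
  assumes i: "i < M" and y: "0 \<le> y" "y \<le> 1"
  shows "audience (1 - r) M (spread(i := y)) i \<le> guaranteed i"
proof (cases "half_width = r")
  case True
  have "audience (1 - r) M (spread(i := y)) i
      \<le> measure lborel (listeners (1 - r) M (spread(i := y)) i)"
    by (rule audience_le_measure[OF i])
  also have "\<dots> \<le> 2 * r" using measure_listeners_le_radius[of "1 - r"] r(1) by simp
  finally show ?thesis using True by (simp add: guaranteed_def)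
next
  case False
  then have hw: "half_width = spacing / 2" "spacing < 2 * r"
    by (auto simp: half_width_def min_def split: if_splits)
  then have "2 * spacing \<le> 2 * guaranteed i" "2 * r \<le> 2 * guaranteed i"
    using r_less_spacing by (auto simp: guaranteed_def)
  have "audience (1 - r) M (spread(i := y)) i \<le> 2 * guaranteed i / 2"
  proof (rule deviation_audience_le[OF i y _ _ _ leftmost_rival(1)[OF i] _ _ rightmost_rival(1)[OF i]])
    show "adjacent_gaps_le (rival_locations M spread i) (2 * guaranteed i)"
      by (rule adjacent_gaps_le_mono[OF adjacent_gaps_spread \<open>2 * spacing \<le> 2 * guaranteed i\<close>])
    show "leftmost_rival i + min (1 - (1 - r)) (leftmost_rival i) \<le> 2 * guaranteed i"
      using \<open>2 * r \<le> 2 * guaranteed i\<close> hw spread_neighbours(1) spread_first r(1) spacing_pos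
      by (auto simp: guaranteed_def leftmost_rival_def)
    show "1 - rightmost_rival i + min (1 - (1 - r)) (1 - rightmost_rival i) \<le> 2 * guaranteed i"
      using \<open>2 * r \<le> 2 * guaranteed i\<close> hw spread_neighbours(2) spread_last r(1) spacing_pos M
      by (auto simp: guaranteed_def rightmost_rival_def)
  qed (use r(1) guaranteed_def half_width leftmost_rival(2) rightmost_rival(2) in auto)
  then show ?thesis by simp
qed

lemma spread_equilibrium: "equilibrium (1 - r) M spread"
  unfolding equilibrium_def valid_profile_def
proof (intro conjI allI impI ballI)
  fix j assume "j < M"
  then show "0 \<le> spread j" "spread j \<le> 1" using spread_range r(1) by fastforce+
next
  fix i y assume "i < M" "y \<in> {0..1::real}"
  then show "audience (1 - r) M (spread(i := y)) i \<le> audience (1 - r) M spread i"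
    using deviation_audience_le_guaranteed guaranteed_le_audience order_trans by fastforce
qed

end

locale paired_ends =
  fixes r :: real and M :: nat
  assumes M: "5 < M" and r: "1 / (2 * (real M - 2)) \<le> r"
begin

definition half_step :: real where "half_step = 1 / (2 * (real M - 2))"

text \<open>Since \<open>j - 1\<close> truncates at 0, firms 0 and 1 share the location \<open>half_step\<close> and firms
  \<open>M - 2\<close> and \<open>M - 1\<close> share \<open>1 - half_step\<close>.\<close>

definition slot :: "nat \<Rightarrow> nat" where "slot j = min (j - 1) (M - 3)"

definition paired :: "nat \<Rightarrow> real" where "paired j = half_step * (2 * real (slot j) + 1)"

lemma half_step_pos: "0 < half_step"
  using M by (simp add: half_step_def)

lemma half_step_le: "half_step \<le> r"
  using r by (simp add: half_step_def)

lemma slot_le: "slot j \<le> M - 3"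
  by (simp add: slot_def)

lemma slot_succ: "t \<le> M - 3 \<Longrightarrow> slot (t + 1) = t"
  by (simp add: slot_def)

lemma slot_eq_0_iff: "slot j = 0 \<longleftrightarrow> j \<le> 1"
  using M by (auto simp: slot_def min_def)

lemma slot_eq_last_iff: "slot j = M - 3 \<longleftrightarrow> M - 2 \<le> j"
  using M by (auto simp: slot_def min_def)

lemma paired_diff: "paired l - paired j = 2 * half_step * (real (slot l) - real (slot j))"
  unfolding paired_def by (simp add: algebra_simps)

lemma paired_step: "slot j < slot l \<Longrightarrow> paired j + 2 * half_step \<le> paired l"
proof -
  assume "slot j < slot l"
  then have "2 * half_step * 1 \<le> 2 * half_step * (real (slot l) - real (slot j))"
    using half_step_pos by (intro mult_left_mono) auto
  then show ?thesis using paired_diff[of l j] by simp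
qed

lemma paired_less_iff: "paired j < paired l \<longleftrightarrow> slot j < slot l"
  using paired_step[of j l] paired_step[of l j] half_step_pos
  by (cases "slot j" "slot l" rule: linorder_cases) (auto simp: paired_def)

lemma paired_eq_iff: "paired j = paired l \<longleftrightarrow> slot j = slot l"
  using paired_less_iff[of j l] paired_less_iff[of l j]
  by (cases "slot j" "slot l" rule: linorder_cases) auto

lemma paired_dist: "slot j \<noteq> slot l \<Longrightarrow> 2 * half_step \<le> \<bar>paired j - paired l\<bar>"
  using paired_step[of j l] paired_step[of l j] by (cases "slot j" "slot l" rule: linorder_cases) auto

lemma paired_first: "paired 0 = half_step" "paired 1 = half_step"
  by (simp_all add: paired_def slot_def)

lemma last_location: "half_step * (2 * real (M - 3) + 1) = 1 - half_step"
  using M by (simp add: half_step_def of_nat_diff field_simps)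

lemma paired_last: "paired (M - 2) = 1 - half_step" "paired (M - 1) = 1 - half_step"
proof -
  have "slot (M - 2) = M - 3" "slot (M - 1) = M - 3" by (auto simp: slot_eq_last_iff)
  then show "paired (M - 2) = 1 - half_step" "paired (M - 1) = 1 - half_step"
    using last_location by (simp_all add: paired_def)
qed

lemma paired_range: "half_step \<le> paired j \<and> paired j \<le> 1 - half_step"
proof
  show "half_step \<le> paired j" using half_step_pos by (simp add: paired_def)
  have "paired j \<le> half_step * (2 * real (M - 3) + 1)"
    unfolding paired_def using slot_le[of j] half_step_pos by (intro mult_left_mono) auto
  then show "paired j \<le> 1 - half_step" using last_location by simp
qed

definition at_end :: "nat \<Rightarrow> bool" where "at_end i \<longleftrightarrow> slot i = 0 \<or> slot i = M - 3"

definition guaranteed :: "nat \<Rightarrow> real" where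
  "guaranteed i = (if at_end i then half_step else 2 * half_step)"

lemma own_listeners: "{paired i - half_step..paired i + half_step} \<subseteq> listeners (1 - r) M paired i"
proof (rule interval_subset_listeners)
  fix j assume "j < M"
  show "paired j = paired i \<or> paired j \<le> 2 * (paired i - half_step) - paired i \<or>
      2 * (paired i + half_step) - paired i \<le> paired j"
    using paired_dist[of j i] paired_eq_iff[of j i] by (cases "slot j = slot i") auto
qed (use paired_range[of i] half_step_le half_step_pos in auto)

lemma card_colocated_at_end: "at_end i \<Longrightarrow> card (colocated M paired i) \<le> 2"
proof -
  assume "at_end i"
  obtain j j' where "colocated M paired i \<subseteq> {j, j'}"
    using \<open>at_end i\<close> unfolding at_end_def
  proof (elim disjE)
    assume 1: "slot i = 0"
    have "colocated M paired i \<subseteq> {0, 1}"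
    proof
      fix j assume "j \<in> colocated M paired i"
      then have "slot j = 0" using 1 by (simp add: paired_eq_iff)
      then have "j \<le> 1" by (simp add: slot_eq_0_iff)
      then show "j \<in> {0, 1}" by (cases j) auto
    qed
    then show ?thesis by (rule that)
  next
    assume 2: "slot i = M - 3"
    have "colocated M paired i \<subseteq> {M - 2, M - 1}"
    proof
      fix j assume "j \<in> colocated M paired i"
      then have "M - 2 \<le> j" "j < M" using 2 slot_eq_last_iff by (auto simp: paired_eq_iff)
      then have "j = M - 2 \<or> j = M - 1" by linarith
      then show "j \<in> {M - 2, M - 1}" by blast
    qed
    then show ?thesis by (rule that)
  qed
  then have "card (colocated M paired i) \<le> card {j, j'}" by (intro card_mono) auto
  also have "\<dots> \<le> 2" by (simp add: card_insert_if)
  finally show ?thesis .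
qed

lemma colocated_inner: "\<not> at_end i \<Longrightarrow> i < M \<Longrightarrow> colocated M paired i = {i}"
proof -
  assume "\<not> at_end i" "i < M"
  then have "slot j = slot i \<Longrightarrow> j = i" for j
    unfolding at_end_def slot_def by (auto simp: min_def split: if_splits)
  then show ?thesis using \<open>i < M\<close> by (auto simp: paired_eq_iff)
qed

lemma guaranteed_le_audience:
  assumes "i < M"
  shows "guaranteed i \<le> audience (1 - r) M paired i"
proof -
  have meas: "2 * half_step \<le> measure lborel (listeners (1 - r) M paired i)"
    using measure_listeners_ge[OF own_listeners] by simp
  show ?thesis
  proof (cases "at_end i")
    case True
    define k where "k = real (card (colocated M paired i))"
    have k: "1 \<le> k" "k \<le> 2"
      using card_colocated_ge_1[OF assms] card_colocated_at_end[OF True] by (auto simp: k_def)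
    have "2 * half_step / 2 \<le> measure lborel (listeners (1 - r) M paired i) / k"
      using meas k half_step_pos by (intro frac_le) auto
    then show ?thesis using True by (simp add: audience_eq guaranteed_def k_def)
  next
    case False
    then show ?thesis using meas by (simp add: audience_eq colocated_inner[OF False assms] guaranteed_def)
  qed
qed

lemma adjacent_gaps_paired:
  assumes "i < M"
  shows "adjacent_gaps_le (rival_locations M paired i) (2 * guaranteed i)"
  unfolding adjacent_gaps_le_def
proof (intro ballI impI)
  fix p p' assume "p \<in> rival_locations M paired i" "p' \<in> rival_locations M paired i" "p < p'"
    and between: "\<forall>z\<in>rival_locations M paired i. z \<le> p \<or> p' \<le> z"
  then obtain j l where jl: "j \<noteq> i" "l \<noteq> i" "p = paired j" "p' = paired l" by auto
  then have "slot j < slot l" using \<open>p < p'\<close> paired_less_iff by simp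
  have skipped: "t + 1 = i" if t: "slot j < t" "t < slot l" for t
  proof (rule ccontr)
    assume "t + 1 \<noteq> i"
    have "t \<le> M - 3" using t slot_le[of l] by simp
    then have "paired (t + 1) \<in> rival_locations M paired i" "slot (t + 1) = t"
      using M \<open>t + 1 \<noteq> i\<close> slot_succ by auto
    then have "p < paired (t + 1)" "paired (t + 1) < p'" using t jl paired_less_iff by auto
    moreover have "paired (t + 1) \<le> p \<or> p' \<le> paired (t + 1)"
      using between \<open>paired (t + 1) \<in> rival_locations M paired i\<close> by blast
    ultimately show False by linarith
  qed
  have "real (slot l) - real (slot j) \<le> (if at_end i then 1 else 2)"
  proof (cases "at_end i")
    case True
    have "slot l \<le> slot j + 1"
    proof (rule ccontr)
      assume "\<not> slot l \<le> slot j + 1"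
      then have "slot i = slot j + 1" using skipped[of "slot j + 1"] slot_succ slot_le[of l] by force
      then show False using True \<open>\<not> slot l \<le> slot j + 1\<close> slot_le[of l] by (auto simp: at_end_def)
    qed
    then show ?thesis using True by simp
  next
    case False
    have "slot l \<le> slot j + 2" using skipped[of "slot j + 1"] skipped[of "slot j + 2"] by force
    then show ?thesis using False by simp
  qed
  then have "2 * half_step * (real (slot l) - real (slot j))
      \<le> 2 * half_step * (if at_end i then 1 else 2)"
    using half_step_pos by (intro mult_left_mono) auto
  then show "p' - p \<le> 2 * guaranteed i"
    using paired_diff[of l j] jl by (cases "at_end i") (simp_all add: guaranteed_def)
qed

lemma deviation_audience_le_guaranteed:
  assumes i: "i < M" and y: "0 \<le> y" "y \<le> 1"
  shows "audience (1 - r) M (paired(i := y)) i \<le> guaranteed i"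
proof -
  have "half_step \<le> guaranteed i" using half_step_pos by (simp add: guaranteed_def)
  have "audience (1 - r) M (paired(i := y)) i \<le> 2 * guaranteed i / 2"
  proof (rule deviation_audience_le[OF i y])
    show "adjacent_gaps_le (rival_locations M paired i) (2 * guaranteed i)"
      by (rule adjacent_gaps_paired[OF i])
    show "half_step \<in> rival_locations M paired i"
      using M paired_first by (intro image_eqI[of _ _ "if i = 0 then 1 else 0"]) auto
    show "1 - half_step \<in> rival_locations M paired i"
      using M paired_last by (intro image_eqI[of _ _ "if i = M - 1 then M - 2 else M - 1"]) auto
    show "half_step + min (1 - (1 - r)) half_step \<le> 2 * guaranteed i"
      "1 - (1 - half_step) + min (1 - (1 - r)) (1 - (1 - half_step)) \<le> 2 * guaranteed i"
      using half_step_le \<open>half_step \<le> guaranteed i\<close> by auto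
  qed (use paired_range half_step_pos half_step_le \<open>half_step \<le> guaranteed i\<close> in auto)
  then show ?thesis by simp
qed

lemma paired_equilibrium: "equilibrium (1 - r) M paired"
  unfolding equilibrium_def valid_profile_def
proof (intro conjI allI impI ballI)
  fix j assume "j < M"
  show "0 \<le> paired j" "paired j \<le> 1" using paired_range[of j] half_step_pos by linarith+
next
  fix i y assume "i < M" "y \<in> {0..1::real}"
  then show "audience (1 - r) M (paired(i := y)) i \<le> audience (1 - r) M paired i"
    using deviation_audience_le_guaranteed guaranteed_le_audience order_trans by fastforce
qed

end

lemma mu_fr_eq:
  assumes "5 < M" "0 \<le> q" "q \<le> 1"
  shows "mu_fr q M = min (1 - q) (1 / (2 * (real M - 2)))"
proof -
  define F where "F = min (1 - q) (1 / (2 * (real M - 2)))"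
  have "\<exists>\<mu>\<in>Psi q M. \<mu> 0 = F"
  proof (cases "1 - q < 1 / (2 * (real M - 2))")
    case True
    interpret evenly_spread "1 - q" M using assms True by unfold_locales auto
    show ?thesis using spread_equilibrium spread_first True by (auto simp: Psi_def F_def)
  next
    case False
    interpret paired_ends "1 - q" M using assms False by unfold_locales auto
    show ?thesis
      using paired_equilibrium paired_first False by (auto simp: Psi_def F_def half_step_def)
  qed
  then have "F \<in> {\<mu> m | \<mu> m. \<mu> \<in> Psi q M \<and> m < M}" using assms(1) by force
  moreover have "F \<le> x" if "x \<in> {\<mu> m | \<mu> m. \<mu> \<in> Psi q M \<and> m < M}" for x
    using that equilibrium_location_ge assms by (auto simp: Psi_def F_def)
  ultimately show ?thesis unfolding mu_fr_def F_def by (rule cInf_eq_minimum)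
qed

theorem proposition6:
  fixes M :: nat and q1 q2 :: real
  assumes "M > 5" and "0 \<le> q1" and "q1 \<le> q2" and "q2 \<le> 1"
  shows "mu_fr q2 M \<le> mu_fr q1 M"
  using mu_fr_eq[of M q1] mu_fr_eq[of M q2] assms by auto

end
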